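(* Let $\ell$ be a prime and let $G^1$ be a Hasse subgroup of $\mathrm{Sp}_4(\mathbb{F}_\ell)$. Then the center $Z(G^1)$ is contained in $\{\pm\mathrm{Id}\}$.
   Context: $\mathrm{Sp}_4(\mathbb{F}_\ell)$ is the isometry group of a non-degenerate alternating bilinear form on $\mathbb{F}_\ell^4$. A subgroup of $\mathrm{GL}_n(\mathbb{F}_\ell)$ is Hasse if it acts irreducibly on $\mathbb{F}_\ell^n$ and each of its elements has an eigenvalue in $\mathbb{F}_\ell$. *)

theory Defs
  imports "HOL-Analysis.Analysis"
begin

definition bilin :: "'a::field ^'n ^'n \<Rightarrow> 'a ^'n \<Rightarrow> 'a ^'n \<Rightarrow> 'a" where
  "bilin J x y = (\<Sum>i\<in>UNIV. x $ i * (J *v y) $ i)"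

definition alternating_form :: "'a::field ^'n ^'n \<Rightarrow> bool" where
  "alternating_form J \<longleftrightarrow> (\<forall>x. bilin J x x = 0)"

definition nondegenerate_form :: "'a::field ^'n ^'n \<Rightarrow> bool" where
  "nondegenerate_form J \<longleftrightarrow> (\<forall>x. (\<forall>y. bilin J x y = 0) \<longrightarrow> x = 0)"

definition Sp :: "'a::field ^'n ^'n \<Rightarrow> ('a ^'n ^'n) set" where
  "Sp J = {g. invertible g \<and> (\<forall>x y. bilin J (g *v x) (g *v y) = bilin J x y)}"

definition matrix_subgroup :: "('a::field ^'n ^'n) set \<Rightarrow> bool" where
  "matrix_subgroup G \<longleftrightarrow> mat 1 \<in> G \<and> (\<forall>g\<in>G. \<forall>h\<in>G. g ** h \<in> G)
     \<and> (\<forall>g\<in>G. invertible g \<and> matrix_inv g \<in> G)"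

definition is_subspace :: "('a::field ^'n) set \<Rightarrow> bool" where
  "is_subspace W \<longleftrightarrow> 0 \<in> W \<and> (\<forall>v\<in>W. \<forall>w\<in>W. v + w \<in> W) \<and> (\<forall>c. \<forall>v\<in>W. c *s v \<in> W)"

definition acts_irreducibly :: "('a::field ^'n ^'n) set \<Rightarrow> bool" where
  "acts_irreducibly G \<longleftrightarrow>
     (\<forall>W. is_subspace W \<and> (\<forall>g\<in>G. \<forall>w\<in>W. g *v w \<in> W) \<longrightarrow> W = {0} \<or> W = UNIV)"

definition has_eigenvalue_in_field :: "'a::field ^'n ^'n \<Rightarrow> bool" where
  "has_eigenvalue_in_field g \<longleftrightarrow> (\<exists>c v. v \<noteq> 0 \<and> g *v v = c *s v)"

definition Hasse :: "('a::field ^'n ^'n) set \<Rightarrow> bool" where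
  "Hasse G \<longleftrightarrow> matrix_subgroup G \<and> acts_irreducibly G \<and> (\<forall>g\<in>G. has_eigenvalue_in_field g)"

definition center :: "('a::field ^'n ^'n) set \<Rightarrow> ('a ^'n ^'n) set" where
  "center G = {z\<in>G. \<forall>g\<in>G. z ** g = g ** z}"

end

theory Submission
  imports Defs
begin

text \<open>
  By the Hasse property a central element z has an eigenvalue c in the field. Its eigenspace
  is nonzero and, since z commutes with G, G-invariant; by irreducibility it is everything,
  so z = c Id (Schur's lemma). A scalar isometry of a nondegenerate form satisfies c^2 = 1.
\<close>

lemma mat_mult_vector: "mat c *v x = c *s (x :: 'a::comm_ring_1 ^'n)"
  by (simp add: vec_eq_iff matrix_vector_mult_def mat_def if_distrib[of "\<lambda>a. a * _"]
      cong: if_cong)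

lemma mat_neg_one: "mat (- 1) = - (mat 1 :: 'a::ring_1 ^'n ^'n)"
  by (simp add: vec_eq_iff mat_def)

lemma bilin_scale_both:
  "bilin J (c *s x) (c *s y) = c * c * bilin (J :: 'a::field ^'n ^'n) x y"
  by (simp add: bilin_def vector_scalar_commute sum_distrib_left algebra_simps)

definition eigenspace :: "'a::field ^'n ^'n \<Rightarrow> 'a \<Rightarrow> ('a ^'n) set" where
  "eigenspace A c = {v. A *v v = c *s v}"

lemma is_subspace_eigenspace: "is_subspace (eigenspace A c)"
  unfolding is_subspace_def eigenspace_def
  by (auto simp: matrix_vector_right_distrib vector_scalar_commute vector_ssub_ldistrib
      algebra_simps)

lemma eigenspace_invariant_if_commute:
  assumes "A ** B = B ** A" and "v \<in> eigenspace A c"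
  shows "B *v v \<in> eigenspace A c"
proof -
  have "A *v (B *v v) = (B ** A) *v v"
    using assms(1) by (simp add: matrix_vector_mul_assoc)
  also have "\<dots> = c *s (B *v v)"
    using assms(2) by (simp add: eigenspace_def matrix_vector_mul_assoc[symmetric]
        vector_scalar_commute)
  finally show ?thesis by (simp add: eigenspace_def)
qed

lemma central_element_scalar:
  assumes "acts_irreducibly G" and "z \<in> center G"
    and "v \<noteq> 0" and "z *v v = c *s v"
  shows "z = mat c"
proof -
  have "\<forall>g\<in>G. \<forall>w\<in>eigenspace z c. g *v w \<in> eigenspace z c"
    using assms(2) by (auto simp: center_def intro: eigenspace_invariant_if_commute)
  moreover have "eigenspace z c \<noteq> {0}"
    using assms(3,4) by (auto simp: eigenspace_def)
  ultimately have "eigenspace z c = UNIV"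
    using assms(1) is_subspace_eigenspace unfolding acts_irreducibly_def by blast
  then show ?thesis
    by (auto simp: matrix_eq eigenspace_def mat_mult_vector)
qed

lemma scalar_isometry_sign:
  assumes "nondegenerate_form J" and "mat c \<in> Sp J"
  shows "c = 1 \<or> c = - 1"
proof -
  have "(1 :: 'a::field ^'n) \<noteq> 0" by (simp add: vec_eq_iff)
  with assms(1) obtain y where y: "bilin J 1 y \<noteq> 0"
    unfolding nondegenerate_form_def by blast
  have "c * c * bilin J 1 y = bilin J 1 y"
    using assms(2) by (simp add: Sp_def mat_mult_vector flip: bilin_scale_both)
  with y have "c * c = 1" by simp
  then show ?thesis by (simp add: square_eq_1_iff)
qed

theorem lemmaA4:
  fixes J :: "'a::{field,finite} ^4 ^4"
    and G :: "('a ^4 ^4) set"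
  assumes "prime CARD('a)"
    and "alternating_form J" and "nondegenerate_form J"
    and "G \<subseteq> Sp J"
    and "Hasse G"
  shows "center G \<subseteq> {mat 1, - mat 1}"
proof
  fix z assume z: "z \<in> center G"
  then have "z \<in> G" by (simp add: center_def)
  with assms(5) obtain c v where "v \<noteq> 0" and "z *v v = c *s v"
    by (auto simp: Hasse_def has_eigenvalue_in_field_def)
  with z assms(5) have "z = mat c"
    by (auto simp: Hasse_def intro: central_element_scalar)
  moreover have "c = 1 \<or> c = - 1"
    using scalar_isometry_sign assms(3,4) \<open>z \<in> G\<close> \<open>z = mat c\<close> by blast
  ultimately show "z \<in> {mat 1, - mat 1}"
    by (auto simp: mat_neg_one)
qed

end
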